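(* Let $x,\tilde x\in(-\infty,0)$ and $y\in(x,0)$, and set $\Delta\vartheta=p_{0,-\infty}(\tilde x)-p_{0,-\infty}(x)$. Then $$p_{\tilde x,0}\Big(p_{\tilde x,1}^{-1}\big(p_{x,1}(y)+\Delta\vartheta\big)\Big)-p_{x,0}(y)=p_{1,-\infty}(\tilde x)-p_{1,-\infty}(x).$$
   Context: For real $p\neq q$ and $w$ strictly between $p$ and $q$ (oriented interval $(p,q)$, $p>q$ allowed), $p_{p,q}(w)=\ln\frac{w-p}{q-w}$, a bijection onto $\mathbb{R}$ with inverse $p_{p,q}^{-1}$; also $p_{p,-\infty}(w)=\ln|w-p|$ for $w<p$. *)

theory Defs
  imports "HOL-Analysis.Analysis"
begin

definition pmap :: "real \<Rightarrow> real \<Rightarrow> real \<Rightarrow> real" where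
  "pmap p q w = ln ((w - p) / (q - w))"

definition strictly_between :: "real \<Rightarrow> real \<Rightarrow> real \<Rightarrow> bool" where
  "strictly_between p q w \<longleftrightarrow> min p q < w \<and> w < max p q"

definition pinv :: "real \<Rightarrow> real \<Rightarrow> real \<Rightarrow> real" where
  "pinv p q t = (THE w. strictly_between p q w \<and> pmap p q w = t)"

definition pmap_minf :: "real \<Rightarrow> real \<Rightarrow> real" where
  "pmap_minf p w = ln \<bar>w - p\<bar>"

end

theory Submission
  imports Defs
begin

text \<open>Exponentiating turns each \<open>p\<^sub>p\<^sub>,\<^sub>q(w)\<close> into the ratio \<open>(w - p)/(q - w)\<close>, and
  \<open>p\<^sub>p\<^sub>,\<^sub>q\<^sup>-\<^sup>1(t) = (p + e\<^sup>t q)/(1 + e\<^sup>t)\<close>. The shift by \<open>\<Delta>\<vartheta>\<close> multiplies the ratio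
  \<open>(y - x)/(1 - y)\<close> by \<open>xt/x\<close> (\<open>xt\<close> stands for \<open>x\<^sup>~\<close>), so the point \<open>w\<close> on \<open>(xt, 1)\<close> it
  determines is an explicit rational function of \<open>x, xt, y\<close>, and the ratio \<open>(w - xt)/(0 - w)\<close>
  factors as \<open>(y - x)/(0 - y) \<cdot> (1 - xt)/(1 - x)\<close>. Taking logarithms gives the claim.\<close>

lemma strictly_between_iff: "strictly_between p q w \<longleftrightarrow> 0 < (w - p) * (q - w)"
  unfolding strictly_between_def zero_less_mult_iff by (cases "p \<le> q") auto

lemma exp_pmap:
  assumes "strictly_between p q w"
  shows "exp (pmap p q w) = (w - p) / (q - w)"
  using assms unfolding strictly_between_iff pmap_def
  by (simp add: zero_less_divide_iff zero_less_mult_iff)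

lemma pinv_eq:
  assumes "p \<noteq> q"
  shows "pinv p q t = (p + exp t * q) / (1 + exp t)"
proof -
  let ?w = "(p + exp t * q) / (1 + exp t)"
  have pos: "1 + exp t > 0"
    by (simp add: add_pos_pos)
  have dp: "?w - p = exp t * (q - p) / (1 + exp t)" and dq: "q - ?w = (q - p) / (1 + exp t)"
    using pos by (simp_all add: field_simps)
  show ?thesis
    unfolding pinv_def
  proof (rule the_equality)
    have "0 < (?w - p) * (q - ?w)"
      unfolding dp dq using pos assms
      by (auto simp: zero_less_mult_iff zero_less_divide_iff mult_pos_neg)
    moreover have "(?w - p) / (q - ?w) = exp t"
      unfolding dp dq using pos assms by simp
    ultimately show "strictly_between p q ?w \<and> pmap p q ?w = t"
      by (simp add: strictly_between_iff pmap_def)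
  next
    fix v assume "strictly_between p q v \<and> pmap p q v = t"
    then have "(v - p) / (q - v) = exp t" and "v \<noteq> q"
      using exp_pmap by (auto simp: strictly_between_def)
    then have "v * (1 + exp t) = p + exp t * q"
      by (simp add: field_simps)
    then show "v = ?w"
      using pos by (simp add: field_simps)
  qed
qed

lemma shifted_ratio_factors:
  fixes x xt y E :: real
  assumes "x < 0" "xt < 0" "x < y" "y < 0" and E: "E = (y - x) * xt / ((1 - y) * x)"
  defines "w \<equiv> (xt + E) / (1 + E)"
  shows "(w - xt) / (0 - w) = (y - x) / (0 - y) * ((1 - xt) / (1 - x))"
proof -
  have xtE: "xt + E = xt * y * (1 - x) / ((1 - y) * x)"
    using assms by (simp add: E field_simps)
  have "E > 0"
    using assms by (simp add: E divide_neg_neg mult_pos_neg)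
  then have "w - xt = E * (1 - xt) / (1 + E)"
    by (simp add: w_def field_simps add_pos_pos)
  moreover have "0 - w = - (xt + E) / (1 + E)"
    by (simp add: w_def minus_divide_left)
  ultimately have "(w - xt) / (0 - w) = E * (1 - xt) / (- (xt + E))"
    using \<open>E > 0\<close> by (simp add: add_pos_pos)
  also have "\<dots> = (y - x) / (0 - y) * ((1 - xt) / (1 - x))"
    unfolding xtE unfolding E using assms by (simp add: divide_simps)
  finally show ?thesis .
qed

theorem proposition2p3:
  fixes x xt y :: real
  assumes "x < 0" and "xt < 0" and "x < y" and "y < 0"
  shows "pmap xt 0 (pinv xt 1 (pmap x 1 y + (pmap_minf 0 xt - pmap_minf 0 x))) - pmap x 0 y
           = pmap_minf 1 xt - pmap_minf 1 x"
proof -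
  define E where "E = exp (pmap x 1 y + (pmap_minf 0 xt - pmap_minf 0 x))"
  define w where "w = (xt + E) / (1 + E)"
  have "E = (y - x) * xt / ((1 - y) * x)"
    using assms exp_pmap[of x 1 y]
    by (simp add: E_def exp_add exp_diff pmap_minf_def strictly_between_def)
  then have ratio: "(w - xt) / (0 - w) = (y - x) / (0 - y) * ((1 - xt) / (1 - x))"
    unfolding w_def by (rule shifted_ratio_factors[OF assms])
  have "(y - x) / (0 - y) > 0" "(1 - xt) / (1 - x) > 0"
    using assms by (simp_all add: divide_less_0_iff)
  then have "pmap xt 0 w = pmap x 0 y + ln ((1 - xt) / (1 - x))"
    unfolding pmap_def ratio by (rule ln_mult_pos)
  moreover have "pinv xt 1 (pmap x 1 y + (pmap_minf 0 xt - pmap_minf 0 x)) = w"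
    using assms by (simp add: pinv_eq w_def E_def)
  ultimately show ?thesis
    using assms by (simp add: pmap_minf_def ln_div)
qed

end
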